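(* Let $g\ge1$ and $n\in\mathbb{Z}\setminus\{0\}$. Let $u_1,\dots,u_{2g+1}$ be pairwise distinct complex numbers varying in a small open set. Let $\gamma_1,\dots,\gamma_{2g}$ be a basis of the first homology of the curve $v^2=(u-u_1)\cdots(u-u_{2g+1})$, represented by cycles avoiding the branch points and infinity and transported continuously as the $u_j$ vary. Let $c_1,\dots,c_{2g}\in\mathbb{C}$ be arbitrary constants, and set $$a_i=\sum_{k=1}^{2g}c_k\oint_{\gamma_k}\frac{v^n\,du}{u-u_i},\qquad A^{(i)}=\begin{pmatrix} n/4 & a_i\\ 0 & -n/4\end{pmatrix},\qquad i=1,\dots,2g+1.$$ Then the matrices $A^{(i)}$ satisfy the Schlesinger system $$\frac{\partial A^{(j)}}{\partial u_k}=\frac{[A^{(k)},A^{(j)}]}{u_k-u_j}\ (k\ne j),\qquad \frac{\partial A^{(k)}}{\partial u_k}=-\sum_{j\neq k}\frac{[A^{(k)},A^{(j)}]}{u_k-u_j},$$ and $A^{(\infty)}:=-A^{(1)}-\dots-A^{(2g+1)}$ is constant. *)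

theory Defs
  imports "HOL-Analysis.Analysis"
begin

text \<open>Point u = (u_1,...,u_{2g+1}) is a vector x :: complex^'m, with CARD('m) = 2g+1.
  Replace the k-th coordinate by z.\<close>
definition vupd :: "complex^'m \<Rightarrow> 'm \<Rightarrow> complex \<Rightarrow> complex^'m" where
  "vupd x k z = (\<chi> i. if i = k then z else x $ i)"

text \<open>Integral of the form v^n du/(u - ui) along the closed cycle on the curve
  v^2 = prod_j (u - u_j) given by the u-path gam : [0,1] -> C together with the
  continuous lift w : [0,1] -> C of the v-coordinate.\<close>
definition hyp_integral :: "int \<Rightarrow> (real \<Rightarrow> complex) \<Rightarrow> (real \<Rightarrow> complex) \<Rightarrow> complex \<Rightarrow> complex" where
  "hyp_integral n gam w ui =
     integral {0..1} (\<lambda>t. (w t) powi n * vector_derivative gam (at t) / (gam t - ui))"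

definition schl_mat :: "int \<Rightarrow> complex \<Rightarrow> complex^2^2" where
  "schl_mat n a = (\<chi> r s. if r = 1 \<and> s = 1 then of_int n / 4
                           else if r = 1 \<and> s = 2 then a
                           else if r = 2 \<and> s = 2 then - (of_int n / 4) else 0)"

definition commutator :: "complex^2^2 \<Rightarrow> complex^2^2 \<Rightarrow> complex^2^2" where
  "commutator A B = A ** B - B ** A"

definition msmul :: "complex \<Rightarrow> complex^2^2 \<Rightarrow> complex^2^2" where
  "msmul c M = (\<chi> r s. c * M $ r $ s)"

definition mat_has_deriv :: "(complex \<Rightarrow> complex^2^2) \<Rightarrow> complex^2^2 \<Rightarrow> complex \<Rightarrow> bool" where
  "mat_has_deriv F D z0 \<longleftrightarrow> (\<forall>r s. ((\<lambda>z. F z $ r $ s) has_field_derivative D $ r $ s) (at z0))"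

end

(*
  Along a lifted cycle t \<mapsto> (\<gamma> t, V t) on v\<^sup>2 = \<Prod>j (u - e j) consider the functional
  L \<psi> = \<integral> V\<^sup>n \<psi>(\<gamma>) d\<gamma>, for \<psi> holomorphic away from the branch points, so that a\<^sub>i is a
  combination of the values L (\<lambda>u. 1/(u - e i)). On each piece of a fine partition V is a
  holomorphic branch of the square root, so the integral over the piece is a difference of values
  of a local primitive; estimating it along the straight segment gives |L \<psi>| \<le> C sup |\<psi>| even
  when \<gamma> is not rectifiable, and this bound justifies differentiation under the integral sign.
  Moving the branch point e k to z multiplies V by \<surd>(1 - (z - e k)/(u - e k)), whose derivative
  at z = e k is -1/(2 (u - e k)). Hence \<partial>\<^sub>k a\<^sub>j is a multiple of L (\<lambda>u. 1/((u - e k)(u - e j))),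
  which partial fractions express through a\<^sub>j and a\<^sub>k; for \<partial>\<^sub>k a\<^sub>k the pole moves as well and one gets
  a multiple of L (\<lambda>u. 1/(u - e k)\<^sup>2), which is eliminated by the exactness of
  d(V\<^sup>n \<phi>(\<gamma>)) = V\<^sup>n (n/2 \<Sum>j \<phi>/(u - e j) + \<phi>') du on the closed cycle; exactness with \<phi> = 1
  gives \<Sum>i a\<^sub>i = 0. Since the commutator [A k, A j] has the single nonzero entry n/2 (a\<^sub>j - a\<^sub>k)
  in position (1,2), the Schlesinger system reduces to these scalar equations.
*)

theory Submission
  imports Defs "HOL-Complex_Analysis.Complex_Analysis"
begin

no_notation fps_nth (infixl \<open>$\<close> 75)

lemma continuous_square_roots_eq:
  fixes f g :: "'a::topological_space \<Rightarrow> complex"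
  assumes S: "connected S" and f: "continuous_on S f" and g: "continuous_on S g"
    and sq: "\<And>x. x \<in> S \<Longrightarrow> (f x)^2 = (g x)^2" and nz: "\<And>x. x \<in> S \<Longrightarrow> g x \<noteq> 0"
    and a: "a \<in> S" "f a = g a" and x: "x \<in> S"
  shows "f x = g x"
proof -
  let ?q = "\<lambda>x. f x / g x"
  have "(?q x)^2 = 1" if "x \<in> S" for x
    using sq[OF that] nz[OF that] by (simp add: power_divide)
  then have "?q ` S \<subseteq> {1, -1}"
    using power2_eq_1_iff by blast
  moreover have "connected (?q ` S)"
    using S f g nz by (intro connected_continuous_image continuous_on_divide) auto
  ultimately obtain b where "?q ` S = {b}"
    using a connected_finite_iff_sing finite_subset by (metis empty_iff finite.emptyI finite_insert image_eqI)
  then have "?q x = ?q a" using a x by (metis imageI singletonD)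
  then show ?thesis using a nz[OF a(1)] nz[OF x] by simp
qed

lemma not_nonpos_Reals_if_norm_diff_1_less:
  fixes w :: complex
  assumes "norm (w - 1) < 1"
  shows "w \<notin> \<real>\<^sub>\<le>\<^sub>0"
proof
  assume "w \<in> \<real>\<^sub>\<le>\<^sub>0"
  then have "Re w \<le> 0" "Im w = 0" by (auto simp: complex_nonpos_Reals_iff)
  then have "norm (w - 1) \<ge> 1"
    using abs_Re_le_cmod[of "w - 1"] by auto
  with assms show False by simp
qed

lemma has_field_derivative_prod_diff:
  fixes e :: "'m::finite \<Rightarrow> complex"
  assumes "\<forall>j. u \<noteq> e j"
  shows "((\<lambda>u. \<Prod>j\<in>UNIV. u - e j) has_field_derivative
          (\<Prod>j\<in>UNIV. u - e j) * (\<Sum>j\<in>UNIV. 1 / (u - e j))) (at u)"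
proof -
  have "((\<lambda>u. \<Prod>j\<in>UNIV. (\<lambda>j u. u - e j) j u) has_field_derivative
          (\<Prod>j\<in>UNIV. (\<lambda>j u. u - e j) j u) * (\<Sum>j\<in>UNIV. 1 / (\<lambda>j u. u - e j) j u)) (at u)"
    by (rule has_field_derivative_prod') (use assms in \<open>auto intro!: derivative_eq_intros\<close>)
  then show ?thesis by simp
qed

lemma sum_inverse_diff_mult_inverse_diff:
  fixes e :: "'m::finite \<Rightarrow> complex"
  shows "m * (\<Sum>j\<in>UNIV. 1 / (u - e j)) * (1 / (u - e k)) + - (1 / (u - e k)^2) =
         (m - 1) * (1 / (u - e k)^2) + (\<Sum>l\<in>UNIV - {k}. m * (1 / ((u - e k) * (u - e l))))"
proof -
  have ring: "m * (a + S) * a + - (a * a) = (m - 1) * (a * a) + m * a * S" for a S :: complex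
    by (simp add: algebra_simps)
  have "m * (\<Sum>j\<in>UNIV. 1 / (u - e j)) * (1 / (u - e k)) + - (1 / (u - e k)^2)
      = (m - 1) * (1 / (u - e k)^2) + m * (1 / (u - e k)) * (\<Sum>l\<in>UNIV - {k}. 1 / (u - e l))"
    unfolding sum.remove[OF finite UNIV_I, of _ k] power_one_over[symmetric]
    unfolding power2_eq_square
    by (rule ring)
  also have "\<dots> = (m - 1) * (1 / (u - e k)^2) + (\<Sum>l\<in>UNIV - {k}. m * (1 / ((u - e k) * (u - e l))))"
    unfolding sum_distrib_left mult.assoc by (intro arg_cong2[where f = "(+)"] refl sum.cong) simp_all
  finally show ?thesis .
qed

lemma has_integral_uniform_pieces:
  fixes f :: "real \<Rightarrow> complex"
  assumes "N > 0" "\<And>i. i < N \<Longrightarrow> (f has_integral I i) {real i / real N .. real (Suc i) / real N}"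
  shows "(f has_integral (\<Sum>i<N. I i)) {0..1}"
proof -
  have "m \<le> N \<Longrightarrow> (f has_integral (\<Sum>i<m. I i)) {0 .. real m / real N}" for m
  proof (induction m)
    case 0 then show ?case using has_integral_refl(1)[of f "0::real"] by simp
  next
    case (Suc m)
    have "(f has_integral ((\<Sum>i<m. I i) + I m)) {0 .. real (Suc m) / real N}"
      by (rule has_integral_combine[of _ "real m / real N"])
        (use Suc assms in \<open>auto simp: divide_right_mono\<close>)
    then show ?case by simp
  qed
  from this[of N] assms(1) show ?thesis by simp
qed

lemma uniform_limit_difference_quotient_rescaled:
  fixes g :: "complex \<Rightarrow> complex"
  assumes g: "(g has_field_derivative g') (at 0)"
    and r: "r > 0" "\<And>u. u \<in> S \<Longrightarrow> r \<le> norm (u - z0)"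
  shows "uniform_limit S (\<lambda>z u. (g ((z - z0) / (u - z0)) - g 0) / (z - z0)) (\<lambda>u. g' / (u - z0)) (at z0)"
proof (rule uniform_limitI)
  fix \<epsilon> :: real assume "\<epsilon> > 0"
  have "((\<lambda>w. (g w - g 0) / w) \<longlongrightarrow> g') (at 0)"
    using g by (simp add: has_field_derivative_iff)
  then obtain \<rho> where \<rho>: "\<rho> > 0" "\<And>w. w \<noteq> 0 \<Longrightarrow> norm w < \<rho> \<Longrightarrow> norm ((g w - g 0) / w - g') < \<epsilon> * r"
    using \<open>\<epsilon> > 0\<close> r(1) unfolding LIM_eq by (metis diff_zero mult_pos_pos)
  have "\<forall>u\<in>S. dist ((g ((z - z0) / (u - z0)) - g 0) / (z - z0)) (g' / (u - z0)) < \<epsilon>"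
    if z: "z \<noteq> z0" "norm (z - z0) < \<rho> * r" for z
  proof
    fix u assume u: "u \<in> S"
    define w where "w = (z - z0) / (u - z0)"
    have ur: "r \<le> norm (u - z0)" using r(2) u .
    then have u0: "u - z0 \<noteq> 0" using r(1) by auto
    have "norm (z - z0) < \<rho> * norm (u - z0)"
      using z(2) ur \<rho>(1) by (meson less_le_trans mult_left_mono less_imp_le)
    then have "w \<noteq> 0" "norm w < \<rho>" using z(1) u0 by (auto simp: w_def norm_divide divide_less_eq)
    then have "norm ((g w - g 0) / w - g') < \<epsilon> * r" by (rule \<rho>(2))
    moreover have "(g w - g 0) / (z - z0) - g' / (u - z0) = ((g w - g 0) / w - g') / (u - z0)"
      using z(1) u0 by (simp add: w_def field_simps)
    ultimately have "norm ((g w - g 0) / (z - z0) - g' / (u - z0)) < \<epsilon> * r / norm (u - z0)"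
      using u0 by (simp add: norm_divide divide_strict_right_mono)
    also have "\<dots> \<le> \<epsilon>" using ur r(1) \<open>\<epsilon> > 0\<close> by (simp add: divide_le_eq mult_left_mono)
    finally show "dist ((g ((z - z0) / (u - z0)) - g 0) / (z - z0)) (g' / (u - z0)) < \<epsilon>"
      by (simp add: w_def dist_norm)
  qed
  moreover have "\<forall>\<^sub>F z in at z0. z \<noteq> z0 \<and> norm (z - z0) < \<rho> * r"
    using \<rho>(1) r(1) by (auto simp: eventually_at dist_norm intro!: exI[of _ "\<rho> * r"])
  ultimately show "\<forall>\<^sub>F z in at z0. \<forall>u\<in>S. dist ((g ((z - z0) / (u - z0)) - g 0) / (z - z0)) (g' / (u - z0)) < \<epsilon>"
    by (auto elim!: eventually_mono)
qed

definition sqrt_factor :: "int \<Rightarrow> complex \<Rightarrow> complex" where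
  "sqrt_factor m w = csqrt (1 - w) powi m"

lemma sqrt_factor_holomorphic: "sqrt_factor m holomorphic_on ball 0 1"
proof -
  have "(\<lambda>w. csqrt (1 - w)) holomorphic_on ball 0 1"
    by (rule holomorphic_on_csqrt') (auto intro!: holomorphic_intros not_nonpos_Reals_if_norm_diff_1_less)
  moreover have "csqrt (1 - w) \<noteq> 0" if "w \<in> ball 0 1" for w using that by auto
  ultimately show ?thesis unfolding sqrt_factor_def by (auto intro!: holomorphic_intros)
qed

lemma sqrt_factor_0 [simp]: "sqrt_factor m 0 = 1"
  by (simp add: sqrt_factor_def)

lemma sqrt_factor_has_field_derivative_0:
  "(sqrt_factor m has_field_derivative - (of_int m / 2)) (at 0)"
proof -
  have "(csqrt has_field_derivative inverse (2 * csqrt 1)) (at ((\<lambda>w. 1 - w) 0))"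
    using has_field_derivative_csqrt[of 1] by simp
  then have "((\<lambda>w. csqrt (1 - w)) has_field_derivative (inverse (2 * csqrt 1) * -1)) (at 0)"
    by (rule DERIV_chain2) (auto intro!: derivative_eq_intros)
  then have "((\<lambda>w. csqrt (1 - w) powi m) has_field_derivative
      (of_int m * csqrt (1 - 0) powi (m - 1) * (inverse (2 * csqrt 1) * -1))) (at 0)"
    by (rule DERIV_power_int) simp
  then show ?thesis unfolding sqrt_factor_def by simp
qed

lemma sqrt_factor_divide:
  assumes "w \<in> ball 0 1"
  shows "sqrt_factor m w / (1 - w) = sqrt_factor (m - 2) w"
proof -
  have "csqrt (1 - w) \<noteq> 0" using assms by auto
  then have "csqrt (1 - w) powi m / csqrt (1 - w) powi 2 = csqrt (1 - w) powi (m - 2)"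
    by (simp add: power_int_diff)
  then show ?thesis unfolding sqrt_factor_def by simp
qed

lemma vupd_nth: "vupd x k z $ j = (if j = k then z else x $ j)"
  by (simp add: vupd_def)

lemma vupd_same [simp]: "vupd x k (x $ k) = x"
  by (simp add: vupd_def vec_eq_iff)

lemma continuous_on_vupd: "continuous_on S (vupd x k)"
  unfolding vupd_def
proof (rule continuous_on_vec_lambda)
  fix i show "continuous_on S (\<lambda>z. if i = k then z else x $ i)" by (cases "i = k") auto
qed

section \<open>Integrals against a lifted cycle\<close>

locale lifted_cycle =
  fixes n :: int and \<gamma> :: "real \<Rightarrow> complex" and V :: "real \<Rightarrow> complex" and e :: "'m::finite \<Rightarrow> complex"
  assumes valid: "valid_path \<gamma>" and closed: "\<gamma> 1 = \<gamma> 0"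
    and avoid: "\<forall>t\<in>{0..1}. \<forall>j. \<gamma> t \<noteq> e j"
    and on_curve: "\<forall>t\<in>{0..1}. (V t)^2 = (\<Prod>j\<in>UNIV. \<gamma> t - e j)"
    and V_cont: "continuous_on {0..1} V"
    and V_closed: "V 1 = V 0"
begin

definition curve_poly :: "complex \<Rightarrow> complex" where
  "curve_poly u = (\<Prod>j\<in>UNIV. u - e j)"

definition margin :: real where
  "margin = Min (range (\<lambda>j. infdist (e j) (path_image \<gamma>)))"

definition off_branch :: "complex set" where
  "off_branch = {u. \<forall>j. margin / 2 < norm (u - e j)}"

definition integrand :: "(complex \<Rightarrow> complex) \<Rightarrow> real \<Rightarrow> complex" where
  "integrand \<psi> t = V t powi n * \<psi> (\<gamma> t) * vector_derivative \<gamma> (at t)"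

definition cycle_integral :: "(complex \<Rightarrow> complex) \<Rightarrow> complex" where
  "cycle_integral \<psi> = integral {0..1} (integrand \<psi>)"

lemma \<gamma>_cont: "continuous_on {0..1} \<gamma>"
  using valid valid_path_imp_path path_def by blast

lemma margin_pos: "margin > 0"
proof -
  have "infdist (e j) (path_image \<gamma>) > 0" for j
  proof -
    have "e j \<notin> path_image \<gamma>" using avoid unfolding path_image_def by (metis imageE)
    moreover have "closed (path_image \<gamma>)" using valid closed_path_image valid_path_imp_path by blast
    moreover have "path_image \<gamma> \<noteq> {}" by (simp add: path_image_def)
    ultimately show ?thesis using infdist_pos_not_in_closed by blast
  qed
  then show ?thesis unfolding margin_def by (subst Min_gr_iff) auto
qed

lemma margin_le: "t \<in> {0..1} \<Longrightarrow> margin \<le> norm (\<gamma> t - e j)"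
proof -
  assume t: "t \<in> {0..1}"
  have "margin \<le> infdist (e j) (path_image \<gamma>)" unfolding margin_def by (rule Min_le) auto
  also have "\<dots> \<le> dist (e j) (\<gamma> t)" using t by (intro infdist_le) (auto simp: path_image_def)
  finally show ?thesis by (simp add: dist_norm norm_minus_commute)
qed

lemma off_branch_far: "u \<in> off_branch \<Longrightarrow> margin / 2 < norm (u - e j)"
  unfolding off_branch_def by auto

lemma off_branch_ne: "u \<in> off_branch \<Longrightarrow> u \<noteq> e j"
  using off_branch_far[of u j] margin_pos by auto

lemma path_in_off_branch: "t \<in> {0..1} \<Longrightarrow> \<gamma> t \<in> off_branch"
proof -
  assume t: "t \<in> {0..1}"
  have "margin / 2 < norm (\<gamma> t - e j)" for j
    using margin_le[OF t, of j] margin_pos by linarith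
  then show ?thesis unfolding off_branch_def by blast
qed

lemma curve_poly_nonzero: "u \<in> off_branch \<Longrightarrow> curve_poly u \<noteq> 0"
  unfolding curve_poly_def using off_branch_ne by auto

lemma V_nonzero: "t \<in> {0..1} \<Longrightarrow> V t \<noteq> 0"
proof -
  assume t: "t \<in> {0..1}"
  have "(V t)^2 \<noteq> 0"
    using on_curve t curve_poly_nonzero[OF path_in_off_branch[OF t]] unfolding curve_poly_def by simp
  then show ?thesis by simp
qed

lemma holomorphic_on_inverse_diff: "(\<lambda>u. 1 / (u - e j)) holomorphic_on off_branch"
  using off_branch_ne by (auto intro!: holomorphic_intros)

lemma norm_inverse_diff_le: "u \<in> off_branch \<Longrightarrow> norm (1 / (u - e j)) \<le> 2 / margin"
proof -
  assume "u \<in> off_branch"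
  then have "margin / 2 \<le> norm (u - e j)" using off_branch_far less_imp_le by blast
  then have "1 / norm (u - e j) \<le> 1 / (margin / 2)" using margin_pos by (intro frac_le) auto
  then show ?thesis by (simp add: norm_divide)
qed

lemma fine_partition_exists:
  "\<exists>N>0. \<forall>i<N. \<forall>t\<in>{real i / real N .. real (Suc i) / real N}.
     norm (\<gamma> t - \<gamma> (real i / real N)) < margin / 4"
proof -
  have "uniformly_continuous_on {0..1} \<gamma>"
    using compact_uniformly_continuous \<gamma>_cont compact_Icc by blast
  then obtain d where d: "d > 0"
    "\<forall>x\<in>{0..1}. \<forall>x'\<in>{0..1}. dist x' x < d \<longrightarrow> dist (\<gamma> x') (\<gamma> x) < margin / 4"
    unfolding uniformly_continuous_on_def using margin_pos by (metis zero_less_divide_iff zero_less_numeral)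
  define N where "N = nat \<lceil>1 / d\<rceil> + 1"
  have N: "N > 0" by (simp add: N_def)
  have "real N > 1 / d" unfolding N_def using d by linarith
  then have Nd: "1 / real N < d" using d N by (simp add: divide_less_eq mult.commute pos_divide_less_eq)
  show ?thesis
  proof (intro exI[of _ N] conjI allI impI ballI N)
    fix i t assume i: "i < N" and t: "t \<in> {real i / real N .. real (Suc i) / real N}"
    have i1: "real i / real N \<in> {0..1}" using i by auto
    have "real (Suc i) / real N \<le> 1" using i by auto
    moreover have "0 \<le> t" using t by (auto intro: order_trans[rotated])
    ultimately have t1: "t \<in> {0..1}" using t by auto
    have "t - real i / real N \<le> 1 / real N" using t by (auto simp: add_divide_distrib)
    then have "dist t (real i / real N) < d" using t Nd by (auto simp: dist_real_def)
    then show "norm (\<gamma> t - \<gamma> (real i / real N)) < margin / 4" using d i1 t1 by (auto simp: dist_norm)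
  qed
qed

definition npieces :: nat where
  "npieces = (SOME N. N > 0 \<and> (\<forall>i<N. \<forall>t\<in>{real i / real N .. real (Suc i) / real N}.
     norm (\<gamma> t - \<gamma> (real i / real N)) < margin / 4))"

definition node :: "nat \<Rightarrow> real" where
  "node i = real i / real npieces"

definition center :: "nat \<Rightarrow> complex" where
  "center i = \<gamma> (node i)"

lemma npieces_pos: "npieces > 0"
  and piece_near_center: "i < npieces \<Longrightarrow> t \<in> {node i .. node (Suc i)} \<Longrightarrow> norm (\<gamma> t - center i) < margin / 4"
  using someI_ex[OF fine_partition_exists] unfolding npieces_def[symmetric] node_def center_def by blast+

lemma node_less: "node i < node (Suc i)"
  unfolding node_def using npieces_pos by (simp add: divide_strict_right_mono)

lemma piece_subset: "i < npieces \<Longrightarrow> {node i .. node (Suc i)} \<subseteq> {0..1}"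
  unfolding node_def using npieces_pos by auto

lemma node_mem: "i < npieces \<Longrightarrow> node i \<in> {0..1}"
  using piece_subset node_less by (metis atLeastAtMost_iff less_imp_le order_refl subsetD)

lemma center_far: "i < npieces \<Longrightarrow> margin \<le> norm (center i - e j)"
  unfolding center_def using margin_le node_mem by blast

lemma piece_in_ball: "i < npieces \<Longrightarrow> t \<in> {node i .. node (Suc i)} \<Longrightarrow> \<gamma> t \<in> ball (center i) (margin / 2)"
  using piece_near_center margin_pos by (fastforce simp: dist_norm norm_minus_commute)

lemma ball_center_subset: "i < npieces \<Longrightarrow> ball (center i) (margin / 2) \<subseteq> off_branch"
proof
  fix u assume i: "i < npieces" and u: "u \<in> ball (center i) (margin / 2)"
  show "u \<in> off_branch" unfolding off_branch_def
  proof (intro CollectI allI)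
    fix j
    have "norm (center i - e j) \<le> norm (u - e j) + norm (center i - u)"
      using norm_triangle_ineq[of "u - e j" "center i - u"] by simp
    then show "margin / 2 < norm (u - e j)"
      using center_far[OF i, of j] u by (simp add: dist_norm)
  qed
qed

definition branch :: "nat \<Rightarrow> complex \<Rightarrow> complex" where
  "branch i u = V (node i) * (\<Prod>j\<in>UNIV. csqrt ((u - e j) / (center i - e j)))"

lemma branch_holomorphic: "i < npieces \<Longrightarrow> branch i holomorphic_on ball (center i) (margin / 2)"
proof -
  assume i: "i < npieces"
  have "(u - e j) / (center i - e j) \<notin> \<real>\<^sub>\<le>\<^sub>0" if u: "u \<in> ball (center i) (margin / 2)" for u j
  proof (rule not_nonpos_Reals_if_norm_diff_1_less)
    have c: "margin \<le> norm (center i - e j)" using center_far[OF i] .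
    then have "center i - e j \<noteq> 0" using margin_pos by auto
    then have "(u - e j) / (center i - e j) - 1 = (u - center i) / (center i - e j)"
      by (simp add: field_simps)
    then show "norm ((u - e j) / (center i - e j) - 1) < 1"
      using u c margin_pos by (simp add: dist_norm norm_minus_commute norm_divide divide_less_eq)
  qed
  then show ?thesis unfolding branch_def by (auto intro!: holomorphic_intros)
qed

lemma branch_squared:
  assumes i: "i < npieces" and u: "u \<in> ball (center i) (margin / 2)"
  shows "(branch i u)^2 = curve_poly u"
proof -
  have c: "center i \<in> off_branch" unfolding center_def using path_in_off_branch node_mem i by blast
  have "(branch i u)^2 = (V (node i))^2 * (\<Prod>j\<in>UNIV. (u - e j) / (center i - e j))"
    unfolding branch_def by (simp add: power_mult_distrib prod_power_distrib)
  also have "(V (node i))^2 = curve_poly (center i)"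
    using on_curve node_mem i unfolding curve_poly_def center_def by blast
  also have "(\<Prod>j\<in>UNIV. (u - e j) / (center i - e j)) = curve_poly u / curve_poly (center i)"
    unfolding curve_poly_def by (simp add: prod_dividef)
  finally show ?thesis using curve_poly_nonzero[OF c] by simp
qed

lemma branch_nonzero: "i < npieces \<Longrightarrow> u \<in> ball (center i) (margin / 2) \<Longrightarrow> branch i u \<noteq> 0"
  using branch_squared curve_poly_nonzero ball_center_subset by (metis power_zero_numeral subsetD)

lemma V_eq_branch:
  assumes i: "i < npieces" and t: "t \<in> {node i .. node (Suc i)}"
  shows "V t = branch i (\<gamma> t)"
proof (rule continuous_square_roots_eq[where S = "{node i .. node (Suc i)}" and a = "node i"])
  show "continuous_on {node i..node (Suc i)} V"
    using V_cont piece_subset i continuous_on_subset by blast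
  have "continuous_on {node i..node (Suc i)} \<gamma>"
    using \<gamma>_cont piece_subset i continuous_on_subset by blast
  then show "continuous_on {node i..node (Suc i)} (\<lambda>t. branch i (\<gamma> t))"
    using holomorphic_on_imp_continuous_on[OF branch_holomorphic[OF i]] piece_in_ball[OF i]
    by (intro continuous_on_compose2[of "ball (center i) (margin / 2)" "branch i" _ \<gamma>]) auto
  fix s assume s: "s \<in> {node i..node (Suc i)}"
  then show "(V s)^2 = (branch i (\<gamma> s))^2"
    using on_curve branch_squared[OF i piece_in_ball[OF i s]] piece_subset[OF i]
    unfolding curve_poly_def by auto
  show "branch i (\<gamma> s) \<noteq> 0" using branch_nonzero[OF i piece_in_ball[OF i s]] .
next
  have "center i - e j \<noteq> 0" for j using center_far[OF i, of j] margin_pos by auto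
  then show "V (node i) = branch i (\<gamma> (node i))" by (simp add: branch_def center_def)
qed (use t node_less in auto)

lemma singular_times_exists:
  "\<exists>S. finite S \<and> (\<forall>t\<in>{0..1} - S. (\<gamma> has_vector_derivative vector_derivative \<gamma> (at t)) (at t))"
proof -
  obtain S D where "finite S" "\<forall>x\<in>{0..1} - S. (\<gamma> has_vector_derivative D x) (at x)"
    using valid unfolding valid_path_def piecewise_C1_differentiable_on_def C1_differentiable_on_def by blast
  then show ?thesis by (metis vector_derivative_at)
qed

definition singular_times :: "real set" where
  "singular_times = (SOME S. finite S \<and>
     (\<forall>t\<in>{0..1} - S. (\<gamma> has_vector_derivative vector_derivative \<gamma> (at t)) (at t)))"

lemma finite_singular_times: "finite singular_times"
  and has_vector_derivative_\<gamma>: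
    "t \<in> {0..1} \<Longrightarrow> t \<notin> singular_times \<Longrightarrow> (\<gamma> has_vector_derivative vector_derivative \<gamma> (at t)) (at t)"
  using someI_ex[OF singular_times_exists] unfolding singular_times_def[symmetric] by blast+

lemma piece_has_integral_primitive:
  assumes i: "i < npieces"
    and G: "\<And>u. u \<in> ball (center i) (margin / 2) \<Longrightarrow>
      (G has_field_derivative (branch i u powi n * \<psi> u)) (at u within ball (center i) (margin / 2))"
  shows "(integrand \<psi> has_integral (G (\<gamma> (node (Suc i))) - G (\<gamma> (node i)))) {node i .. node (Suc i)}"
proof -
  have "\<gamma> piecewise_differentiable_on {node i..node (Suc i)}"
    using valid piece_subset[OF i] unfolding valid_path_def
    by (meson piecewise_C1_differentiable_on_subset piecewise_C1_imp_differentiable)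
  then have int: "((\<lambda>t. branch i (\<gamma> t) powi n * \<psi> (\<gamma> t) * vector_derivative \<gamma> (at t within {node i..node (Suc i)}))
        has_integral (G (\<gamma> (node (Suc i))) - G (\<gamma> (node i)))) {node i..node (Suc i)}"
    using contour_integral_primitive_lemma[of "node i" "node (Suc i)" "ball (center i) (margin / 2)" G
        "\<lambda>u. branch i u powi n * \<psi> u" \<gamma>] node_less[of i] G piece_in_ball[OF i] by auto
  show ?thesis
  proof (rule has_integral_spike_finite[where S = "singular_times \<union> {node i, node (Suc i)}", OF _ _ int])
    show "finite (singular_times \<union> {node i, node (Suc i)})" using finite_singular_times by simp
    fix t assume t: "t \<in> {node i..node (Suc i)} - (singular_times \<union> {node i, node (Suc i)})"
    then have "t \<in> {0..1}" "t \<notin> singular_times" using piece_subset[OF i] by auto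
    then have "vector_derivative \<gamma> (at t within {node i..node (Suc i)}) = vector_derivative \<gamma> (at t)"
      using vector_derivative_at_within_ivl[OF has_vector_derivative_\<gamma>] t node_less by auto
    then show "integrand \<psi> t =
        branch i (\<gamma> t) powi n * \<psi> (\<gamma> t) * vector_derivative \<gamma> (at t within {node i..node (Suc i)})"
      using V_eq_branch[OF i] t unfolding integrand_def by simp
  qed
qed

lemma branch_power_holomorphic:
  "i < npieces \<Longrightarrow> (\<lambda>u. branch i u powi n) holomorphic_on ball (center i) (margin / 2)"
  using branch_holomorphic branch_nonzero by (auto intro!: holomorphic_intros)

lemma branch_power_bounded:
  "i < npieces \<Longrightarrow> \<exists>M\<ge>0. \<forall>u\<in>cball (center i) (margin / 4). norm (branch i u powi n) \<le> M"
proof -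
  assume i: "i < npieces"
  have "cball (center i) (margin / 4) \<subseteq> ball (center i) (margin / 2)"
    using margin_pos by (intro cball_subset_ball_iff[THEN iffD2]) auto
  then have "continuous_on (cball (center i) (margin / 4)) (\<lambda>u. branch i u powi n)"
    using holomorphic_on_imp_continuous_on[OF branch_power_holomorphic[OF i]] continuous_on_subset by blast
  then have "bounded ((\<lambda>u. branch i u powi n) ` cball (center i) (margin / 4))"
    by (intro compact_imp_bounded compact_continuous_image) auto
  then obtain M where "\<forall>u\<in>cball (center i) (margin / 4). norm (branch i u powi n) \<le> M"
    unfolding bounded_iff by blast
  then show ?thesis by (intro exI[of _ "max 0 M"]) auto
qed

definition branch_bound :: "nat \<Rightarrow> real" where
  "branch_bound i = (SOME M. M \<ge> 0 \<and> (\<forall>u\<in>cball (center i) (margin / 4). norm (branch i u powi n) \<le> M))"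

lemma branch_bound_nonneg: "i < npieces \<Longrightarrow> 0 \<le> branch_bound i"
  and norm_branch_power_le:
    "i < npieces \<Longrightarrow> u \<in> cball (center i) (margin / 4) \<Longrightarrow> norm (branch i u powi n) \<le> branch_bound i"
  using someI_ex[OF branch_power_bounded] unfolding branch_bound_def[symmetric] by blast+

text \<open>The difference of primitive values is estimated along the straight segment between the end
  points of the piece, so no rectifiability of \<open>\<gamma>\<close> is needed.\<close>

lemma piece_has_integral_bounded:
  assumes i: "i < npieces" and \<psi>: "\<psi> holomorphic_on off_branch"
  shows "\<exists>I. (integrand \<psi> has_integral I) {node i .. node (Suc i)} \<and>
            (\<forall>m. (\<forall>u\<in>off_branch. norm (\<psi> u) \<le> m) \<longrightarrow> norm I \<le> branch_bound i * m * (margin / 4))"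
proof -
  let ?B = "ball (center i) (margin / 2)" and ?f = "\<lambda>u. branch i u powi n * \<psi> u"
  let ?a = "\<gamma> (node i)" and ?b = "\<gamma> (node (Suc i))"
  have "?f holomorphic_on ?B"
    using branch_power_holomorphic[OF i] holomorphic_on_subset[OF \<psi> ball_center_subset[OF i]]
    by (rule holomorphic_on_mult)
  then obtain G where G: "\<And>u. u \<in> ?B \<Longrightarrow> (G has_field_derivative ?f u) (at u within ?B)"
    using holomorphic_convex_primitive'[OF convex_ball open_ball] by blast
  have sub: "cball (center i) (margin / 4) \<subseteq> ?B"
    using margin_pos by (intro cball_subset_ball_iff[THEN iffD2]) auto
  have "?a \<in> cball (center i) (margin / 4)" "?b \<in> cball (center i) (margin / 4)"
    using margin_pos piece_near_center[OF i, of "node (Suc i)"] node_less[of i]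
    by (auto simp: center_def dist_norm norm_minus_commute less_imp_le)
  then have seg: "closed_segment ?a ?b \<subseteq> cball (center i) (margin / 4)"
    by (intro closed_segment_subset) auto
  have ci: "(?f has_contour_integral (G ?b - G ?a)) (linepath ?a ?b)"
    using contour_integral_primitive[of ?B G ?f "linepath ?a ?b"] G seg sub by auto
  show ?thesis
  proof (intro exI conjI allI impI)
    show "(integrand \<psi> has_integral (G ?b - G ?a)) {node i .. node (Suc i)}"
      using piece_has_integral_primitive[OF i] G by blast
    fix m assume m: "\<forall>u\<in>off_branch. norm (\<psi> u) \<le> m"
    have "m \<ge> 0" using m ball_center_subset[OF i] margin_pos
      by (meson centre_in_ball half_gt_zero norm_ge_zero order_trans subsetD)
    then have "norm (G ?b - G ?a) \<le> (branch_bound i * m) * norm (?b - ?a)"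
      using seg sub ball_center_subset[OF i] m branch_bound_nonneg[OF i] norm_branch_power_le[OF i]
      by (intro has_contour_integral_bound_linepath[OF ci]) (auto simp: norm_mult intro!: mult_mono)
    also have "\<dots> \<le> branch_bound i * m * (margin / 4)"
      using \<open>m \<ge> 0\<close> branch_bound_nonneg[OF i] \<open>?b \<in> cball (center i) (margin / 4)\<close>
      by (intro mult_left_mono) (auto simp: center_def dist_norm norm_minus_commute)
    finally show "norm (G ?b - G ?a) \<le> branch_bound i * m * (margin / 4)" .
  qed
qed

definition cycle_bound :: real where
  "cycle_bound = (\<Sum>i<npieces. branch_bound i) * (margin / 4)"

lemma cycle_bound_nonneg: "0 \<le> cycle_bound"
  unfolding cycle_bound_def using branch_bound_nonneg margin_pos
  by (intro mult_nonneg_nonneg sum_nonneg) auto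

lemma has_integral_integrand_bounded:
  assumes "\<psi> holomorphic_on off_branch"
  shows "\<exists>I. (integrand \<psi> has_integral I) {0..1} \<and>
            (\<forall>m. (\<forall>u\<in>off_branch. norm (\<psi> u) \<le> m) \<longrightarrow> norm I \<le> cycle_bound * m)"
proof -
  obtain I where I: "\<And>i. i < npieces \<Longrightarrow> (integrand \<psi> has_integral I i) {node i .. node (Suc i)} \<and>
      (\<forall>m. (\<forall>u\<in>off_branch. norm (\<psi> u) \<le> m) \<longrightarrow> norm (I i) \<le> branch_bound i * m * (margin / 4))"
    using piece_has_integral_bounded[OF _ assms] by metis
  show ?thesis
  proof (intro exI conjI allI impI)
    show "(integrand \<psi> has_integral (\<Sum>i<npieces. I i)) {0..1}"
      using has_integral_uniform_pieces[OF npieces_pos] I unfolding node_def by blast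
    fix m assume "\<forall>u\<in>off_branch. norm (\<psi> u) \<le> m"
    then have "norm (\<Sum>i<npieces. I i) \<le> (\<Sum>i<npieces. branch_bound i * m * (margin / 4))"
      using I by (intro order_trans[OF norm_sum] sum_mono) auto
    also have "\<dots> = cycle_bound * m"
      unfolding cycle_bound_def sum_distrib_right by (simp add: mult_ac)
    finally show "norm (\<Sum>i<npieces. I i) \<le> cycle_bound * m" .
  qed
qed

lemma integrand_integrable: "\<psi> holomorphic_on off_branch \<Longrightarrow> integrand \<psi> integrable_on {0..1}"
  using has_integral_integrand_bounded by blast

lemma norm_cycle_integral_le:
  "\<psi> holomorphic_on off_branch \<Longrightarrow> (\<forall>u\<in>off_branch. norm (\<psi> u) \<le> m) \<Longrightarrow>
   norm (cycle_integral \<psi>) \<le> cycle_bound * m"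
  unfolding cycle_integral_def using has_integral_integrand_bounded integral_unique by metis

lemma bounded_const_divide_diff: "bounded ((\<lambda>u. c / (u - e j)) ` off_branch)"
proof -
  have "norm (c / (u - e j)) \<le> norm c * (2 / margin)" if "u \<in> off_branch" for u
  proof -
    have "norm (c / (u - e j)) = norm c * norm (1 / (u - e j))"
      unfolding norm_divide norm_one by (simp only: times_divide_eq_right mult_1_right)
    also have "\<dots> \<le> norm c * (2 / margin)"
      using norm_inverse_diff_le[OF that] by (rule mult_left_mono) simp
    finally show ?thesis .
  qed
  then show ?thesis unfolding bounded_iff by blast
qed

lemma cycle_integral_cong:
  "(\<And>u. u \<in> off_branch \<Longrightarrow> f u = g u) \<Longrightarrow> cycle_integral f = cycle_integral g"
  unfolding cycle_integral_def integrand_def by (rule integral_cong) (use path_in_off_branch in auto)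

lemma cycle_integral_add:
  assumes "f holomorphic_on off_branch" "g holomorphic_on off_branch"
  shows "cycle_integral (\<lambda>u. f u + g u) = cycle_integral f + cycle_integral g"
proof -
  have "integrand (\<lambda>u. f u + g u) = (\<lambda>t. integrand f t + integrand g t)"
    by (auto simp: integrand_def algebra_simps)
  then show ?thesis
    unfolding cycle_integral_def using integral_add[OF integrand_integrable integrand_integrable] assms by simp
qed

lemma cycle_integral_diff:
  assumes "f holomorphic_on off_branch" "g holomorphic_on off_branch"
  shows "cycle_integral (\<lambda>u. f u - g u) = cycle_integral f - cycle_integral g"
proof -
  have "integrand (\<lambda>u. f u - g u) = (\<lambda>t. integrand f t - integrand g t)"
    by (auto simp: integrand_def algebra_simps)
  then show ?thesis
    unfolding cycle_integral_def using integral_diff[OF integrand_integrable integrand_integrable] assms by simp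
qed

lemma cycle_integral_cmult: "cycle_integral (\<lambda>u. c * f u) = c * cycle_integral f"
proof -
  have "integrand (\<lambda>u. c * f u) = (\<lambda>t. c * integrand f t)" by (auto simp: integrand_def)
  then show ?thesis unfolding cycle_integral_def by simp
qed

lemma cycle_integral_divide: "cycle_integral (\<lambda>u. f u / c) = cycle_integral f / c"
  using cycle_integral_cmult[of "inverse c" f] by (simp add: field_simps)

lemma cycle_integral_sum:
  "finite A \<Longrightarrow> (\<And>a. a \<in> A \<Longrightarrow> f a holomorphic_on off_branch) \<Longrightarrow>
   cycle_integral (\<lambda>u. \<Sum>a\<in>A. f a u) = (\<Sum>a\<in>A. cycle_integral (f a))"
proof (induction A rule: finite_induct)
  case (insert a A)
  then show ?case by (simp add: cycle_integral_add holomorphic_on_sum)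
qed (simp add: cycle_integral_def integrand_def[abs_def])

text \<open>Differentiation under the integral sign, justified by the estimate
  \<open>norm_cycle_integral_le\<close> in place of dominated convergence.\<close>

lemma has_field_derivative_cycle_integral:
  assumes F: "\<forall>\<^sub>F z in at z0. F z holomorphic_on off_branch" "F z0 holomorphic_on off_branch"
    and E: "E holomorphic_on off_branch"
    and lim: "uniform_limit off_branch (\<lambda>z u. (F z u - F z0 u) / (z - z0)) E (at z0)"
  shows "((\<lambda>z. cycle_integral (F z)) has_field_derivative cycle_integral E) (at z0)"
  unfolding has_field_derivative_iff tendsto_iff
proof (intro allI impI)
  fix \<epsilon> :: real assume "\<epsilon> > 0"
  define \<eta> where "\<eta> = \<epsilon> / (cycle_bound + 1)"
  have \<eta>: "\<eta> > 0" "cycle_bound * \<eta> < \<epsilon>"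
    using \<open>\<epsilon> > 0\<close> cycle_bound_nonneg by (auto simp: \<eta>_def field_simps)
  have "\<forall>\<^sub>F z in at z0. z \<noteq> z0 \<and> F z holomorphic_on off_branch \<and>
          (\<forall>u\<in>off_branch. dist ((F z u - F z0 u) / (z - z0)) (E u) < \<eta>)"
    using F(1) uniform_limitD[OF lim \<eta>(1)] by (auto simp: eventually_at_filter elim: eventually_elim2)
  then show "\<forall>\<^sub>F z in at z0.
      dist ((cycle_integral (F z) - cycle_integral (F z0)) / (z - z0)) (cycle_integral E) < \<epsilon>"
  proof (rule eventually_mono, elim conjE)
    fix z assume z: "z \<noteq> z0" "F z holomorphic_on off_branch"
      and close: "\<forall>u\<in>off_branch. dist ((F z u - F z0 u) / (z - z0)) (E u) < \<eta>"
    have hol: "(\<lambda>u. (F z u - F z0 u) / (z - z0)) holomorphic_on off_branch"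
      using z(2) F(2) by (intro holomorphic_intros) (use z(1) in auto)
    have "(cycle_integral (F z) - cycle_integral (F z0)) / (z - z0) - cycle_integral E
        = cycle_integral (\<lambda>u. (F z u - F z0 u) / (z - z0) - E u)"
      using z(2) F(2) E hol by (simp add: cycle_integral_diff cycle_integral_divide)
    also have "norm \<dots> \<le> cycle_bound * \<eta>"
      using close by (intro norm_cycle_integral_le holomorphic_on_diff hol E) (auto simp: dist_norm intro: less_imp_le)
    finally show "dist ((cycle_integral (F z) - cycle_integral (F z0)) / (z - z0)) (cycle_integral E) < \<epsilon>"
      using \<eta>(2) by (simp add: dist_norm)
  qed
qed

lemma branch_has_field_derivative:
  assumes i: "i < npieces" and u: "u \<in> ball (center i) (margin / 2)"
  shows "(branch i has_field_derivative (branch i u / 2 * (\<Sum>j\<in>UNIV. 1 / (u - e j)))) (at u)"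
proof -
  define D where "D = deriv (branch i) u"
  have D: "(branch i has_field_derivative D) (at u)"
    unfolding D_def using holomorphic_derivI[OF branch_holomorphic[OF i] open_ball u] by blast
  have uS: "u \<in> off_branch" using u ball_center_subset[OF i] by blast
  have "(curve_poly has_field_derivative (curve_poly u * (\<Sum>j\<in>UNIV. 1 / (u - e j)))) (at u)"
    using has_field_derivative_prod_diff[of u e] off_branch_ne[OF uS] unfolding curve_poly_def[abs_def] by auto
  then have "((\<lambda>v. (branch i v)^2) has_field_derivative (curve_poly u * (\<Sum>j\<in>UNIV. 1 / (u - e j)))) (at u)"
    by (rule has_field_derivative_transform_within_open[OF _ open_ball u]) (use branch_squared[OF i] in auto)
  moreover have "((\<lambda>v. (branch i v)^2) has_field_derivative (2 * branch i u * D)) (at u)"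
    using DERIV_power[OF D, of 2] by (simp add: mult_ac)
  ultimately have "2 * branch i u * D = (branch i u)^2 * (\<Sum>j\<in>UNIV. 1 / (u - e j))"
    using DERIV_unique branch_squared[OF i u] by metis
  then have "D = branch i u / 2 * (\<Sum>j\<in>UNIV. 1 / (u - e j))"
    using branch_nonzero[OF i u] by (simp add: power2_eq_square field_simps)
  with D show ?thesis by (simp only:)
qed

lemma V_has_vector_derivative:
  assumes i: "i < npieces" and t: "t \<in> {node i<..<node (Suc i)}" "t \<notin> singular_times"
  shows "(V has_vector_derivative
          (vector_derivative \<gamma> (at t) * (V t / 2 * (\<Sum>j\<in>UNIV. 1 / (\<gamma> t - e j))))) (at t)"
proof -
  have t1: "t \<in> {0..1}" using t piece_subset[OF i] by auto
  have "((branch i \<circ> \<gamma>) has_vector_derivative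
      (vector_derivative \<gamma> (at t) * (branch i (\<gamma> t) / 2 * (\<Sum>j\<in>UNIV. 1 / (\<gamma> t - e j))))) (at t)"
    using t by (intro field_vector_diff_chain_at has_vector_derivative_\<gamma>[OF t1]
        branch_has_field_derivative[OF i piece_in_ball[OF i]]) auto
  then have "(V has_vector_derivative
      (vector_derivative \<gamma> (at t) * (branch i (\<gamma> t) / 2 * (\<Sum>j\<in>UNIV. 1 / (\<gamma> t - e j))))) (at t)"
    by (rule has_vector_derivative_transform_within_open[of _ _ _ "{node i<..<node (Suc i)}"])
       (use t V_eq_branch[OF i] in auto)
  then show ?thesis using V_eq_branch[OF i, of t] t by auto
qed

lemma between_nodes:
  assumes t: "t \<in> {0<..<1}" "t \<notin> node ` {..npieces}"
  shows "\<exists>i<npieces. t \<in> {node i<..<node (Suc i)}"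
proof -
  define i where "i = nat \<lfloor>t * real npieces\<rfloor>"
  have N: "real npieces > 0" using npieces_pos by simp
  have ri: "real i = of_int \<lfloor>t * real npieces\<rfloor>" unfolding i_def using t N by simp
  then have le: "real i \<le> t * real npieces" "t * real npieces < real i + 1" by linarith+
  have tN: "t * real npieces < real npieces" using t N by auto
  then have iN: "i < npieces" using le by linarith
  have "real i \<noteq> t * real npieces"
  proof
    assume "real i = t * real npieces"
    then have "t = node i" unfolding node_def using N by (simp add: field_simps)
    then show False using t iN by auto
  qed
  then have "node i < t" unfolding node_def using le N by (simp add: divide_less_eq)
  moreover have "t < node (Suc i)" unfolding node_def using le N by (simp add: less_divide_eq)
  ultimately show ?thesis using iN by auto
qed

text \<open>The integrand is the derivative of \<open>t \<mapsto> V t ^ n * \<phi> (\<gamma> t)\<close>, since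
  \<open>V' = V \<gamma>' (\<Sum>j. 1 / (\<gamma> - e j)) / 2\<close> from \<open>V\<^sup>2 = curve_poly \<circ> \<gamma>\<close>; the cycle is closed.\<close>

lemma cycle_integral_exact:
  assumes \<phi>: "\<And>u. u \<in> off_branch \<Longrightarrow> (\<phi> has_field_derivative \<phi>' u) (at u)"
  shows "cycle_integral (\<lambda>u. of_int n / 2 * (\<Sum>j\<in>UNIV. 1 / (u - e j)) * \<phi> u + \<phi>' u) = 0"
proof -
  define F where "F t = V t powi n * \<phi> (\<gamma> t)" for t
  let ?\<psi> = "\<lambda>u. of_int n / 2 * (\<Sum>j\<in>UNIV. 1 / (u - e j)) * \<phi> u + \<phi>' u"
  have "(integrand ?\<psi> has_integral (F 1 - F 0)) {0..1}"
  proof (rule fundamental_theorem_of_calculus_interior_strong[where S = "singular_times \<union> node ` {..npieces}"])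
    show "finite (singular_times \<union> node ` {..npieces})" using finite_singular_times by simp
    have "continuous_on off_branch \<phi>"
      using \<phi> by (meson DERIV_isCont continuous_at_imp_continuous_on)
    then show "continuous_on {0..1} F" unfolding F_def
      using \<gamma>_cont path_in_off_branch V_cont V_nonzero
      by (intro continuous_intros continuous_on_compose2[of off_branch \<phi> _ \<gamma>]) auto
    fix t assume t: "t \<in> {0<..<1} - (singular_times \<union> node ` {..npieces})"
    then obtain i where i: "i < npieces" "t \<in> {node i<..<node (Suc i)}" using between_nodes by blast
    have t1: "t \<in> {0..1}" "t \<notin> singular_times" using t by auto
    let ?g = "vector_derivative \<gamma> (at t)" and ?S = "\<Sum>j\<in>UNIV. 1 / (\<gamma> t - e j)"
    have "((\<lambda>s. V s powi n) has_vector_derivative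
        (?g * (V t / 2 * ?S) * (of_int n * V t powi (n - 1)))) (at t)"
      using field_vector_diff_chain_at[OF V_has_vector_derivative[OF i t1(2)]
          DERIV_power_int[OF DERIV_ident, of n "V t" UNIV]] V_nonzero[OF t1(1)] by (simp add: o_def)
    moreover have "((\<lambda>s. \<phi> (\<gamma> s)) has_vector_derivative (?g * \<phi>' (\<gamma> t))) (at t)"
      using field_vector_diff_chain_at[OF has_vector_derivative_\<gamma>[OF t1] \<phi>[OF path_in_off_branch[OF t1(1)]]]
      by (simp add: o_def)
    ultimately have "(F has_vector_derivative
        (V t powi n * (?g * \<phi>' (\<gamma> t)) + ?g * (V t / 2 * ?S) * (of_int n * V t powi (n - 1)) * \<phi> (\<gamma> t))) (at t)"
      unfolding F_def by (rule has_vector_derivative_mult)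
    moreover have "V t powi (n - 1) * V t = V t powi n"
      by (rule power_int_minus_mult) (use V_nonzero[OF t1(1)] in auto)
    then have "V t powi n * (?g * \<phi>' (\<gamma> t)) + ?g * (V t / 2 * ?S) * (of_int n * V t powi (n - 1)) * \<phi> (\<gamma> t)
        = integrand ?\<psi> t"
      unfolding integrand_def by (simp add: algebra_simps flip: \<open>V t powi (n - 1) * V t = V t powi n\<close>)
    ultimately show "(F has_vector_derivative integrand ?\<psi> t) (at t)" by simp
  qed simp
  moreover have "F 1 = F 0" unfolding F_def using closed V_closed by simp
  ultimately show ?thesis unfolding cycle_integral_def by (simp add: integral_unique)
qed

lemma sum_cycle_integral_inverse_diff:
  assumes "n \<noteq> 0"
  shows "(\<Sum>l\<in>UNIV. cycle_integral (\<lambda>u. 1 / (u - e l))) = 0"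
proof -
  have "cycle_integral (\<lambda>u. of_int n / 2 * (\<Sum>j\<in>UNIV. 1 / (u - e j)) * 1 + 0) = 0"
    by (rule cycle_integral_exact) auto
  then have "of_int n / 2 * (\<Sum>l\<in>UNIV. cycle_integral (\<lambda>u. 1 / (u - e l))) = 0"
    by (simp only: mult_1_right add_0_right cycle_integral_cmult
        cycle_integral_sum[OF finite holomorphic_on_inverse_diff])
  then show ?thesis using assms by simp
qed

lemma cycle_integral_partial_fractions:
  assumes "e k \<noteq> e j"
  shows "cycle_integral (\<lambda>u. 1 / ((u - e k) * (u - e j))) =
         (cycle_integral (\<lambda>u. 1 / (u - e k)) - cycle_integral (\<lambda>u. 1 / (u - e j))) / (e k - e j)"
proof -
  have "cycle_integral (\<lambda>u. 1 / ((u - e k) * (u - e j))) =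
        cycle_integral (\<lambda>u. (1 / (u - e k) - 1 / (u - e j)) / (e k - e j))"
  proof (rule cycle_integral_cong)
    fix u assume "u \<in> off_branch"
    then have "u - e k \<noteq> 0" "u - e j \<noteq> 0" "e k - e j \<noteq> 0" using assms off_branch_ne by auto
    then have "1 / (u - e k) - 1 / (u - e j) = (e k - e j) / ((u - e k) * (u - e j))"
      by (simp add: diff_frac_eq)
    then show "1 / ((u - e k) * (u - e j)) = (1 / (u - e k) - 1 / (u - e j)) / (e k - e j)"
      using \<open>e k - e j \<noteq> 0\<close> by simp
  qed
  then show ?thesis
    by (simp add: cycle_integral_divide cycle_integral_diff holomorphic_on_inverse_diff)
qed

lemma cycle_integral_inverse_diff_squared:
  assumes e: "inj e"
  shows "(1 - of_int n / 2) * cycle_integral (\<lambda>u. 1 / (u - e k)^2) =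
         - (\<Sum>l\<in>UNIV - {k}. of_int n / 2 *
              (cycle_integral (\<lambda>u. 1 / (u - e l)) - cycle_integral (\<lambda>u. 1 / (u - e k))) / (e k - e l))"
proof -
  let ?m = "of_int n / 2 :: complex" and ?I = "\<lambda>l. cycle_integral (\<lambda>u. 1 / (u - e l))"
  have hol_sq: "(\<lambda>u. 1 / (u - e k)^2) holomorphic_on off_branch"
    using off_branch_ne by (auto intro!: holomorphic_intros)
  have hol_prod: "(\<lambda>u. ?m * (1 / ((u - e k) * (u - e l)))) holomorphic_on off_branch" for l
    using off_branch_ne by (auto intro!: holomorphic_intros)
  have "0 = cycle_integral (\<lambda>u. ?m * (\<Sum>j\<in>UNIV. 1 / (u - e j)) * (1 / (u - e k)) + - (1 / (u - e k)^2))"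
    using off_branch_ne
    by (intro cycle_integral_exact[symmetric]) (auto intro!: derivative_eq_intros simp: power2_eq_square)
  also have "\<dots> = cycle_integral (\<lambda>u. (?m - 1) * (1 / (u - e k)^2) +
                           (\<Sum>l\<in>UNIV - {k}. ?m * (1 / ((u - e k) * (u - e l)))))"
    by (simp only: sum_inverse_diff_mult_inverse_diff)
  also have "\<dots> = (?m - 1) * cycle_integral (\<lambda>u. 1 / (u - e k)^2) +
                  (\<Sum>l\<in>UNIV - {k}. ?m * cycle_integral (\<lambda>u. 1 / ((u - e k) * (u - e l))))"
  proof -
    have "(\<lambda>u. (?m - 1) * (1 / (u - e k)^2)) holomorphic_on off_branch"
      by (intro holomorphic_on_mult holomorphic_on_const hol_sq)
    moreover have "(\<lambda>u. \<Sum>l\<in>UNIV - {k}. ?m * (1 / ((u - e k) * (u - e l)))) holomorphic_on off_branch"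
      by (intro holomorphic_on_sum hol_prod)
    ultimately show ?thesis
      by (simp only: cycle_integral_add cycle_integral_cmult cycle_integral_sum[OF finite hol_prod])
  qed
  also have "\<dots> = (?m - 1) * cycle_integral (\<lambda>u. 1 / (u - e k)^2) +
                  (\<Sum>l\<in>UNIV - {k}. ?m * ((?I k - ?I l) / (e k - e l)))"
    using e by (intro arg_cong2[where f = "(+)"] refl sum.cong)
      (auto simp: cycle_integral_partial_fractions inj_eq)
  also have "\<dots> = (?m - 1) * cycle_integral (\<lambda>u. 1 / (u - e k)^2) -
                  (\<Sum>l\<in>UNIV - {k}. ?m * (?I l - ?I k) / (e k - e l))"
    unfolding diff_conv_add_uminus[of "(?m - 1) * _"] sum_negf[symmetric]
    by (simp only: minus_divide_left mult_minus_right[symmetric] minus_diff_eq times_divide_eq_right)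
  finally show ?thesis
    by (simp add: algebra_simps)
qed

section \<open>Moving a branch point\<close>

lemma sqrt_factor_holomorphic_on_off_branch:
  assumes "norm (z - e k) < margin / 2"
  shows "(\<lambda>u. sqrt_factor m ((z - e k) / (u - e k))) holomorphic_on off_branch"
proof -
  have "(z - e k) / (u - e k) \<in> ball 0 1" if "u \<in> off_branch" for u
    using assms off_branch_far[OF that, of k] by (simp add: norm_divide divide_less_eq)
  then have "(sqrt_factor m \<circ> (\<lambda>u. (z - e k) / (u - e k))) holomorphic_on off_branch"
    using off_branch_ne
    by (intro holomorphic_on_compose_gen[OF _ sqrt_factor_holomorphic]) (auto intro!: holomorphic_intros)
  then show ?thesis by (simp add: o_def)
qed

text \<open>Moving the branch point \<open>e k\<close> to \<open>z\<close> multiplies the integrand by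
  \<open>sqrt_factor n ((z - e k) / (u - e k))\<close>; this is its derivative in \<open>z\<close> at \<open>z = e k\<close>.\<close>

lemma has_field_derivative_cycle_integral_sqrt_factor:
  assumes q: "q holomorphic_on off_branch" "bounded (q ` off_branch)"
  shows "((\<lambda>z. cycle_integral (\<lambda>u. sqrt_factor m ((z - e k) / (u - e k)) * q u)) has_field_derivative
           cycle_integral (\<lambda>u. - (of_int m / 2) / (u - e k) * q u)) (at (e k))"
proof -
  have "bounded ((\<lambda>u. - (of_int m / 2) / (u - e k)) ` off_branch)"
    by (rule bounded_const_divide_diff)
  moreover have "uniform_limit off_branch
      (\<lambda>z u. (sqrt_factor m ((z - e k) / (u - e k)) - sqrt_factor m 0) / (z - e k))
      (\<lambda>u. - (of_int m / 2) / (u - e k)) (at (e k))"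
    using margin_pos off_branch_far less_imp_le
    by (intro uniform_limit_difference_quotient_rescaled[OF sqrt_factor_has_field_derivative_0,
          of "margin / 2"]) auto
  ultimately have "uniform_limit off_branch
      (\<lambda>z u. (sqrt_factor m ((z - e k) / (u - e k)) - sqrt_factor m 0) / (z - e k) * q u)
      (\<lambda>u. - (of_int m / 2) / (u - e k) * q u) (at (e k))"
    using q(2) by (intro uniform_lim_mult uniform_limit_const) auto
  moreover have "\<forall>\<^sub>F z in at (e k). norm (z - e k) < margin / 2"
    using margin_pos by (auto simp: eventually_at dist_norm intro!: exI[of _ "margin / 2"])
  then have "\<forall>\<^sub>F z in at (e k). (\<lambda>u. sqrt_factor m ((z - e k) / (u - e k)) * q u) holomorphic_on off_branch"
    by (elim eventually_mono) (intro holomorphic_on_mult q(1) sqrt_factor_holomorphic_on_off_branch)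
  moreover have "(\<lambda>u. - (of_int m / 2) / (u - e k) * q u) holomorphic_on off_branch"
    using q(1) off_branch_ne by (intro holomorphic_intros) auto
  ultimately show ?thesis
  proof (intro has_field_derivative_cycle_integral)
    assume "uniform_limit off_branch
      (\<lambda>z u. (sqrt_factor m ((z - e k) / (u - e k)) - sqrt_factor m 0) / (z - e k) * q u)
      (\<lambda>u. - (of_int m / 2) / (u - e k) * q u) (at (e k))"
    then show "uniform_limit off_branch
      (\<lambda>z u. (sqrt_factor m ((z - e k) / (u - e k)) * q u - sqrt_factor m ((e k - e k) / (u - e k)) * q u)
        / (z - e k))
      (\<lambda>u. - (of_int m / 2) / (u - e k) * q u) (at (e k))"
      by (rule uniform_limit_cong'[THEN iffD1, rotated 2]) (simp_all add: algebra_simps)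
  qed (use q(1) in simp_all)
qed

lemma hyp_integral_eq_cycle_integral: "hyp_integral n \<gamma> V y = cycle_integral (\<lambda>u. 1 / (u - y))"
  unfolding hyp_integral_def cycle_integral_def integrand_def by (rule integral_cong) simp

lemma hyp_integral_moved_eq_cycle_integral:
  "hyp_integral n \<gamma> (\<lambda>t. V t * csqrt (1 - (z - e k) / (\<gamma> t - e k))) y =
   cycle_integral (\<lambda>u. sqrt_factor n ((z - e k) / (u - e k)) / (u - y))"
  unfolding hyp_integral_def cycle_integral_def integrand_def sqrt_factor_def
  by (rule integral_cong) (simp add: power_int_mult_distrib)

lemma has_field_derivative_hyp_integral_moved_other:
  assumes "e j \<noteq> e k"
  shows "((\<lambda>z. hyp_integral n \<gamma> (\<lambda>t. V t * csqrt (1 - (z - e k) / (\<gamma> t - e k))) (e j)) has_field_derivative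
           of_int n / 2 * (hyp_integral n \<gamma> V (e j) - hyp_integral n \<gamma> V (e k)) / (e k - e j)) (at (e k))"
proof -
  have "((\<lambda>z. cycle_integral (\<lambda>u. sqrt_factor n ((z - e k) / (u - e k)) * (1 / (u - e j)))) has_field_derivative
      cycle_integral (\<lambda>u. - (of_int n / 2) / (u - e k) * (1 / (u - e j)))) (at (e k))"
    by (intro has_field_derivative_cycle_integral_sqrt_factor holomorphic_on_inverse_diff bounded_const_divide_diff)
  moreover have "cycle_integral (\<lambda>u. - (of_int n / 2) / (u - e k) * (1 / (u - e j))) =
      - (of_int n / 2) * cycle_integral (\<lambda>u. 1 / ((u - e k) * (u - e j)))"
    unfolding cycle_integral_cmult[symmetric] by (rule arg_cong[of _ _ cycle_integral]) auto
  moreover have "- (of_int n / 2) * cycle_integral (\<lambda>u. 1 / ((u - e k) * (u - e j))) =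
      of_int n / 2 * (cycle_integral (\<lambda>u. 1 / (u - e j)) - cycle_integral (\<lambda>u. 1 / (u - e k))) / (e k - e j)"
  proof -
    have "- c * ((a - b) / d) = c * (b - a) / d" for a b c d :: complex
      by (metis minus_diff_eq mult_minus_left mult_minus_right times_divide_eq_right)
    then show ?thesis unfolding cycle_integral_partial_fractions[OF not_sym[OF assms]] .
  qed
  ultimately show ?thesis
    by (simp only: hyp_integral_moved_eq_cycle_integral hyp_integral_eq_cycle_integral times_divide_eq_right
        mult_1_right)
qed

lemma has_field_derivative_hyp_integral_moved_self:
  assumes e: "inj e"
  shows "((\<lambda>z. hyp_integral n \<gamma> (\<lambda>t. V t * csqrt (1 - (z - e k) / (\<gamma> t - e k))) z) has_field_derivative
           - (\<Sum>l\<in>UNIV - {k}. of_int n / 2 *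
                (hyp_integral n \<gamma> V (e l) - hyp_integral n \<gamma> V (e k)) / (e k - e l))) (at (e k))"
proof -
  have moved: "cycle_integral (\<lambda>u. sqrt_factor (n - 2) ((z - e k) / (u - e k)) * (1 / (u - e k))) =
      hyp_integral n \<gamma> (\<lambda>t. V t * csqrt (1 - (z - e k) / (\<gamma> t - e k))) z"
    if z: "z \<in> ball (e k) (margin / 2)" for z
    unfolding hyp_integral_moved_eq_cycle_integral
  proof (rule cycle_integral_cong)
    fix u assume u: "u \<in> off_branch"
    have w: "(z - e k) / (u - e k) \<in> ball 0 1"
      using z off_branch_far[OF u, of k] by (simp add: dist_norm norm_minus_commute norm_divide divide_less_eq)
    have "u - e k \<noteq> 0" using off_branch_ne[OF u] by simp
    then have "(z - e k) / (u - e k) * (u - e k) = z - e k" by simp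
    then have uz: "u - z = (1 - (z - e k) / (u - e k)) * (u - e k)"
      unfolding left_diff_distrib mult_1_left by simp
    show "sqrt_factor (n - 2) ((z - e k) / (u - e k)) * (1 / (u - e k)) =
        sqrt_factor n ((z - e k) / (u - e k)) / (u - z)"
      unfolding uz divide_divide_eq_left[symmetric] sqrt_factor_divide[OF w] by simp
  qed
  have "((\<lambda>z. cycle_integral (\<lambda>u. sqrt_factor (n - 2) ((z - e k) / (u - e k)) * (1 / (u - e k))))
      has_field_derivative cycle_integral (\<lambda>u. - (of_int (n - 2) / 2) / (u - e k) * (1 / (u - e k)))) (at (e k))"
    by (intro has_field_derivative_cycle_integral_sqrt_factor holomorphic_on_inverse_diff bounded_const_divide_diff)
  then have "((\<lambda>z. hyp_integral n \<gamma> (\<lambda>t. V t * csqrt (1 - (z - e k) / (\<gamma> t - e k))) z)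
      has_field_derivative cycle_integral (\<lambda>u. - (of_int (n - 2) / 2) / (u - e k) * (1 / (u - e k)))) (at (e k))"
    by (rule has_field_derivative_transform_within_open[OF _ open_ball[of "e k" "margin / 2"]])
      (use margin_pos moved in auto)
  moreover have "- (of_int (n - 2) / 2 :: complex) = 1 - of_int n / 2" by (simp add: field_simps)
  then have "cycle_integral (\<lambda>u. - (of_int (n - 2) / 2) / (u - e k) * (1 / (u - e k))) =
      (1 - of_int n / 2) * cycle_integral (\<lambda>u. 1 / (u - e k)^2)"
    unfolding cycle_integral_cmult[symmetric]
    by (intro arg_cong[of _ _ cycle_integral] ext) (simp add: power2_eq_square)
  ultimately show ?thesis
    by (simp only: cycle_integral_inverse_diff_squared[OF e] hyp_integral_eq_cycle_integral)
qed

end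

section \<open>The Schlesinger system\<close>

definition scalar_schlesinger :: "int \<Rightarrow> complex^'m \<Rightarrow> ('m \<Rightarrow> complex^'m \<Rightarrow> complex) \<Rightarrow> bool" where
  "scalar_schlesinger n x a \<longleftrightarrow>
     (\<forall>j k. k \<noteq> j \<longrightarrow> ((\<lambda>z. a j (vupd x k z)) has_field_derivative
        of_int n / 2 * (a j x - a k x) / (x $ k - x $ j)) (at (x $ k))) \<and>
     (\<forall>k. ((\<lambda>z. a k (vupd x k z)) has_field_derivative
        - (\<Sum>l\<in>UNIV - {k}. of_int n / 2 * (a l x - a k x) / (x $ k - x $ l))) (at (x $ k)))"

lemma scalar_schlesinger_sum:
  fixes a :: "'i \<Rightarrow> 'm \<Rightarrow> complex^'m \<Rightarrow> complex"
  assumes a: "\<And>m. m \<in> M \<Longrightarrow> scalar_schlesinger n x (a m)"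
  shows "scalar_schlesinger n x (\<lambda>i y. \<Sum>m\<in>M. c m * a m i y)"
  unfolding scalar_schlesinger_def
proof (intro conjI allI impI)
  fix j k :: 'm assume "k \<noteq> j"
  then show "((\<lambda>z. \<Sum>m\<in>M. c m * a m j (vupd x k z)) has_field_derivative
      of_int n / 2 * ((\<Sum>m\<in>M. c m * a m j x) - (\<Sum>m\<in>M. c m * a m k x)) / (x $ k - x $ j)) (at (x $ k))"
    using a unfolding scalar_schlesinger_def
    by (intro DERIV_cong[OF DERIV_sum[OF DERIV_cmult]])
       (auto simp: sum_subtractf[symmetric] sum_distrib_left sum_divide_distrib algebra_simps)
next
  fix k :: 'm
  show "((\<lambda>z. \<Sum>m\<in>M. c m * a m k (vupd x k z)) has_field_derivative
      - (\<Sum>l\<in>UNIV - {k}. of_int n / 2 * ((\<Sum>m\<in>M. c m * a m l x) - (\<Sum>m\<in>M. c m * a m k x)) /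
          (x $ k - x $ l))) (at (x $ k))"
    using a unfolding scalar_schlesinger_def
    by (intro DERIV_cong[OF DERIV_sum[OF DERIV_cmult]])
       (auto simp: sum_subtractf[symmetric] sum_distrib_left sum_divide_distrib sum_negf
         sum.swap[of _ M] algebra_simps)
qed

locale cycle_family =
  fixes U :: "(complex^'m) set" and \<gamma> :: "real \<Rightarrow> complex" and W :: "complex^'m \<Rightarrow> real \<Rightarrow> complex"
  assumes open_U: "open U"
    and valid: "valid_path \<gamma>" and closed: "pathfinish \<gamma> = pathstart \<gamma>"
    and avoid: "\<forall>y\<in>U. \<forall>t\<in>{0..1}. \<forall>j. \<gamma> t \<noteq> y $ j"
    and on_curve: "\<forall>y\<in>U. \<forall>t\<in>{0..1}. (W y t)^2 = (\<Prod>j\<in>UNIV. \<gamma> t - y $ j)"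
    and lift_cont: "continuous_on (U \<times> {0..1}) (\<lambda>p. W (fst p) (snd p))"
    and lift_closed: "\<forall>y\<in>U. W y 1 = W y 0"
begin

lemma lifted_cycle_at: "x \<in> U \<Longrightarrow> lifted_cycle \<gamma> (W x) (\<lambda>j. x $ j)"
proof unfold_locales
  assume x: "x \<in> U"
  have "continuous_on {0..1} (\<lambda>t. (x, t))" by (intro continuous_intros)
  then show "continuous_on {0..1} (W x)"
    using continuous_on_compose2[OF lift_cont, of "{0..1}" "\<lambda>t. (x, t)"] x by auto
qed (use valid closed avoid on_curve lift_closed in \<open>auto simp: pathfinish_def pathstart_def\<close>)

lemma lift_squared_vupd:
  assumes x: "x \<in> U" and y: "vupd x k y \<in> U" and t: "t \<in> {0..1}"
  shows "(W (vupd x k y) t)^2 = (W x t)^2 * (1 - (y - x $ k) / (\<gamma> t - x $ k))"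
proof -
  have \<gamma>t: "\<gamma> t - x $ k \<noteq> 0" using avoid x t by auto
  have split: "(\<Prod>j\<in>UNIV. \<gamma> t - v $ j) = (\<gamma> t - v $ k) * (\<Prod>j\<in>UNIV - {k}. \<gamma> t - x $ j)"
    if "\<forall>j\<in>UNIV - {k}. v $ j = x $ j" for v
    using that by (simp add: prod.remove[of UNIV k])
  have "(W (vupd x k y) t)^2 = (\<gamma> t - y) * (\<Prod>j\<in>UNIV - {k}. \<gamma> t - x $ j)"
    using on_curve y t split[of "vupd x k y"] by (simp add: vupd_nth)
  also have "\<dots> = (\<gamma> t - x $ k) * (\<Prod>j\<in>UNIV - {k}. \<gamma> t - x $ j) * (1 - (y - x $ k) / (\<gamma> t - x $ k))"
    using \<gamma>t by (simp add: field_simps)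
  also have "\<dots> = (W x t)^2 * (1 - (y - x $ k) / (\<gamma> t - x $ k))"
    using on_curve x t split[of x] by simp
  finally show ?thesis .
qed

text \<open>Both sides are continuous square roots of the same function of \<open>z\<close> on a disc, and they
  agree at \<open>z = x $ k\<close>.\<close>

lemma lift_moved:
  assumes x: "x \<in> U" and d: "d > 0" "\<And>t. t \<in> {0..1} \<Longrightarrow> d \<le> norm (\<gamma> t - x $ k)"
  shows "\<exists>r>0. \<forall>z\<in>ball (x $ k) r. vupd x k z \<in> U \<and>
           (\<forall>t\<in>{0..1}. W (vupd x k z) t = W x t * csqrt (1 - (z - x $ k) / (\<gamma> t - x $ k)))"
proof -
  have "open (vupd x k -` U)" using open_vimage[OF open_U continuous_on_vupd] .
  moreover have "x $ k \<in> vupd x k -` U" using x by simp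
  ultimately obtain r1 where r1: "r1 > 0" "ball (x $ k) r1 \<subseteq> vupd x k -` U" using openE by blast
  define r where "r = min r1 (d / 2)"
  have r: "r > 0" using r1 d by (simp add: r_def)
  have inU: "vupd x k z \<in> U" if "z \<in> ball (x $ k) r" for z using that r1 r_def by auto
  show ?thesis
  proof (intro exI[of _ r] conjI r ballI inU)
    fix z and t :: real assume z: "z \<in> ball (x $ k) r" and t: "t \<in> {0..1}"
    define \<rho> where "\<rho> z = 1 - (z - x $ k) / (\<gamma> t - x $ k)" for z
    have \<rho>: "\<rho> z \<notin> \<real>\<^sub>\<le>\<^sub>0" if "z \<in> ball (x $ k) r" for z
    proof (rule not_nonpos_Reals_if_norm_diff_1_less)
      have "norm (z - x $ k) < d / 2" using that r_def by (auto simp: dist_norm norm_minus_commute)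
      then have "norm (z - x $ k) < norm (\<gamma> t - x $ k)" using d t by fastforce
      then show "norm (\<rho> z - 1) < 1" unfolding \<rho>_def by (simp add: norm_divide divide_less_eq)
    qed
    have \<gamma>t: "\<gamma> t - x $ k \<noteq> 0" using avoid x t by auto
    have "(\<Prod>j\<in>UNIV. \<gamma> t - x $ j) \<noteq> 0" using avoid x t by auto
    then have Wx: "W x t \<noteq> 0" using on_curve x t by (metis power_zero_numeral)
    show "W (vupd x k z) t = W x t * csqrt (\<rho> z)"
    proof (rule continuous_square_roots_eq[where S = "ball (x $ k) r" and a = "x $ k" and x = z
          and f = "\<lambda>z. W (vupd x k z) t" and g = "\<lambda>z. W x t * csqrt (\<rho> z)"])
      have "continuous_on (ball (x $ k) r) (\<lambda>z. (vupd x k z, t))"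
        by (intro continuous_intros continuous_on_vupd)
      moreover have "(\<lambda>z. (vupd x k z, t)) ` ball (x $ k) r \<subseteq> U \<times> {0..1}" using inU t by auto
      ultimately show "continuous_on (ball (x $ k) r) (\<lambda>z. W (vupd x k z) t)"
        using continuous_on_compose2[OF lift_cont, of "ball (x $ k) r" "\<lambda>z. (vupd x k z, t)"] by simp
      show "continuous_on (ball (x $ k) r) (\<lambda>z. W x t * csqrt (\<rho> z))"
        unfolding \<rho>_def using \<rho>[unfolded \<rho>_def] \<gamma>t
        by (intro continuous_intros continuous_on_compose2[OF continuous_on_csqrt,
              of _ "\<lambda>z. 1 - (z - x $ k) / (\<gamma> t - x $ k)"]) (auto simp: ComplI)
      fix y assume y: "y \<in> ball (x $ k) r"
      show "(W (vupd x k y) t)^2 = (W x t * csqrt (\<rho> y))^2"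
        using lift_squared_vupd[OF x inU[OF y] t] by (simp add: \<rho>_def power_mult_distrib)
      show "W x t * csqrt (\<rho> y) \<noteq> 0"
        using Wx \<rho>[OF y] by (auto simp: nonpos_Reals_zero_I)
    qed (use r z Wx in \<open>auto simp: \<rho>_def\<close>)
  qed
qed

lemma scalar_schlesinger_hyp_integral:
  assumes x: "x \<in> U" and inj: "inj (\<lambda>j. x $ j)"
  shows "scalar_schlesinger n x (\<lambda>i y. hyp_integral n \<gamma> (W y) (y $ i))"
proof -
  interpret lifted_cycle n \<gamma> "W x" "\<lambda>j. x $ j" using lifted_cycle_at[OF x] .
  have local: "\<exists>r>0. \<forall>z\<in>ball (x $ k) r. \<forall>y. hyp_integral n \<gamma> (W (vupd x k z)) y =
      hyp_integral n \<gamma> (\<lambda>t. W x t * csqrt (1 - (z - x $ k) / (\<gamma> t - x $ k))) y" for k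
  proof -
    obtain r where "r > 0" "\<forall>z\<in>ball (x $ k) r. vupd x k z \<in> U \<and>
        (\<forall>t\<in>{0..1}. W (vupd x k z) t = W x t * csqrt (1 - (z - x $ k) / (\<gamma> t - x $ k)))"
      using lift_moved[OF x margin_pos margin_le] by blast
    then show ?thesis unfolding hyp_integral_def by (intro exI[of _ r] conjI ballI allI integral_cong) auto
  qed
  show ?thesis
    unfolding scalar_schlesinger_def
  proof (intro conjI allI impI)
    fix j k :: 'm assume "k \<noteq> j"
    then have "x $ j \<noteq> x $ k" using inj by (auto simp: inj_def)
    moreover obtain r where "r > 0" "\<forall>z\<in>ball (x $ k) r. \<forall>y. hyp_integral n \<gamma> (W (vupd x k z)) y =
        hyp_integral n \<gamma> (\<lambda>t. W x t * csqrt (1 - (z - x $ k) / (\<gamma> t - x $ k))) y"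
      using local by blast
    ultimately show "((\<lambda>z. hyp_integral n \<gamma> (W (vupd x k z)) (vupd x k z $ j)) has_field_derivative
        of_int n / 2 * (hyp_integral n \<gamma> (W x) (x $ j) - hyp_integral n \<gamma> (W x) (x $ k)) / (x $ k - x $ j))
        (at (x $ k))"
      using \<open>k \<noteq> j\<close>
      by (intro has_field_derivative_transform_within_open[OF has_field_derivative_hyp_integral_moved_other
            open_ball[of "x $ k" r]]) (auto simp: vupd_nth)
  next
    fix k :: 'm
    obtain r where "r > 0" "\<forall>z\<in>ball (x $ k) r. \<forall>y. hyp_integral n \<gamma> (W (vupd x k z)) y =
        hyp_integral n \<gamma> (\<lambda>t. W x t * csqrt (1 - (z - x $ k) / (\<gamma> t - x $ k))) y"
      using local by blast
    then show "((\<lambda>z. hyp_integral n \<gamma> (W (vupd x k z)) (vupd x k z $ k)) has_field_derivative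
        - (\<Sum>l\<in>UNIV - {k}. of_int n / 2 * (hyp_integral n \<gamma> (W x) (x $ l) - hyp_integral n \<gamma> (W x) (x $ k)) /
            (x $ k - x $ l))) (at (x $ k))"
      by (intro has_field_derivative_transform_within_open[OF has_field_derivative_hyp_integral_moved_self
            open_ball[of "x $ k" r]]) (auto simp: vupd_nth inj)
  qed
qed

lemma sum_hyp_integral_eq_0:
  assumes "x \<in> U" "n \<noteq> 0"
  shows "(\<Sum>i\<in>UNIV. hyp_integral n \<gamma> (W x) (x $ i)) = 0"
proof -
  interpret lifted_cycle n \<gamma> "W x" "\<lambda>j. x $ j" using lifted_cycle_at[OF assms(1)] .
  show ?thesis using sum_cycle_integral_inverse_diff[OF assms(2)] by (simp add: hyp_integral_eq_cycle_integral)
qed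

end

lemma schl_mat_12 [simp]: "schl_mat n a $ 1 $ 2 = a"
  by (simp add: schl_mat_def)

lemma schl_mat_nth_indep: "\<not> (r = 1 \<and> s = 2) \<Longrightarrow> schl_mat n a $ r $ s = schl_mat n b $ r $ s"
  by (auto simp: schl_mat_def)

lemma commutator_schl_mat:
  "commutator (schl_mat n a) (schl_mat n b) $ r $ s = (if r = 1 \<and> s = 2 then of_int n / 2 * (b - a) else 0)"
  using exhaust_2[of r] exhaust_2[of s]
  by (auto simp: commutator_def schl_mat_def matrix_matrix_mult_def sum_2 field_simps)

lemma msmul_nth [simp]: "msmul c M $ r $ s = c * M $ r $ s"
  by (simp add: msmul_def)

lemma mat_has_deriv_schl_mat:
  assumes "(f has_field_derivative D $ 1 $ 2) (at z)" and "\<And>r s. \<not> (r = 1 \<and> s = 2) \<Longrightarrow> D $ r $ s = 0"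
  shows "mat_has_deriv (\<lambda>z. schl_mat n (f z)) D z"
  unfolding mat_has_deriv_def
proof (intro allI)
  fix r s :: 2
  show "((\<lambda>z. schl_mat n (f z) $ r $ s) has_field_derivative D $ r $ s) (at z)"
  proof (cases "r = 1 \<and> s = 2")
    case False
    then have "(\<lambda>z. schl_mat n (f z) $ r $ s) = (\<lambda>z. schl_mat n 0 $ r $ s)"
      using schl_mat_nth_indep by blast
    then show ?thesis using assms(2)[OF False] by simp
  qed (use assms(1) in auto)
qed

lemma schlesinger_schl_mat:
  fixes a :: "'m \<Rightarrow> complex^'m \<Rightarrow> complex"
  assumes "scalar_schlesinger n x a" and A: "\<forall>i y. A i y = schl_mat n (a i y)"
  shows "\<forall>j k. k \<noteq> j \<longrightarrow> mat_has_deriv (\<lambda>z. A j (vupd x k z))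
            (msmul (1 / (x $ k - x $ j)) (commutator (A k x) (A j x))) (x $ k)"
    and "\<forall>k. mat_has_deriv (\<lambda>z. A k (vupd x k z))
            (- (\<Sum>j\<in>UNIV - {k}. msmul (1 / (x $ k - x $ j)) (commutator (A k x) (A j x)))) (x $ k)"
  unfolding A[rule_format]
proof -
  have quotient: "c * y / d = 1 / d * (c * y)" for c y d :: complex by simp
  show "\<forall>j k. k \<noteq> j \<longrightarrow> mat_has_deriv (\<lambda>z. schl_mat n (a j (vupd x k z)))
            (msmul (1 / (x $ k - x $ j)) (commutator (schl_mat n (a k x)) (schl_mat n (a j x)))) (x $ k)"
  proof (intro allI impI mat_has_deriv_schl_mat)
    fix j k :: 'm assume "k \<noteq> j"
    then show "((\<lambda>z. a j (vupd x k z)) has_field_derivative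
        msmul (1 / (x $ k - x $ j)) (commutator (schl_mat n (a k x)) (schl_mat n (a j x))) $ 1 $ 2) (at (x $ k))"
      using assms unfolding scalar_schlesinger_def quotient by (simp add: commutator_schl_mat)
  qed (auto simp: commutator_schl_mat)
  show "\<forall>k. mat_has_deriv (\<lambda>z. schl_mat n (a k (vupd x k z)))
            (- (\<Sum>j\<in>UNIV - {k}. msmul (1 / (x $ k - x $ j)) (commutator (schl_mat n (a k x)) (schl_mat n (a j x)))))
            (x $ k)"
  proof (intro allI mat_has_deriv_schl_mat)
    fix k :: 'm
    show "((\<lambda>z. a k (vupd x k z)) has_field_derivative
        (- (\<Sum>j\<in>UNIV - {k}. msmul (1 / (x $ k - x $ j)) (commutator (schl_mat n (a k x)) (schl_mat n (a j x)))))
          $ 1 $ 2) (at (x $ k))"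
      using assms unfolding scalar_schlesinger_def quotient by (simp add: commutator_schl_mat sum_component)
  qed (auto simp: commutator_schl_mat sum_component)
qed

lemma sum_schl_mat_eq:
  assumes "(\<Sum>i\<in>I. a i) = (\<Sum>i\<in>I. b i)"
  shows "(\<Sum>i\<in>I. schl_mat n (a i)) = (\<Sum>i\<in>I. schl_mat n (b i))"
proof -
  have "(\<Sum>i\<in>I. schl_mat n (a i)) $ r $ s = (\<Sum>i\<in>I. schl_mat n (b i)) $ r $ s" for r s
  proof (cases "r = 1 \<and> s = 2")
    case False
    have "schl_mat n (a i) $ r $ s = schl_mat n (b i) $ r $ s" for i
      using schl_mat_nth_indep[OF False] .
    then show ?thesis by (simp add: sum_component)
  qed (use assms in \<open>auto simp: sum_component\<close>)
  then show ?thesis by (simp add: vec_eq_iff)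
qed

theorem corollary1:
  fixes g :: nat and n :: int
    and U :: "(complex^'m) set"
    and gam :: "nat \<Rightarrow> real \<Rightarrow> complex"
    and W :: "nat \<Rightarrow> complex^'m \<Rightarrow> real \<Rightarrow> complex"
    and c :: "nat \<Rightarrow> complex"
    and a :: "'m \<Rightarrow> complex^'m \<Rightarrow> complex"
    and A :: "'m \<Rightarrow> complex^'m \<Rightarrow> complex^2^2"
  assumes g: "g \<ge> 1" and n: "n \<noteq> 0"
    and card: "CARD('m) = 2 * g + 1"
    and U: "open U" "connected U"
    and distinct: "\<forall>x\<in>U. inj (\<lambda>j. x $ j)"
    and paths: "\<forall>k<2*g. valid_path (gam k) \<and> pathfinish (gam k) = pathstart (gam k)"
    and avoid: "\<forall>k<2*g. \<forall>x\<in>U. \<forall>t\<in>{0..1}. \<forall>j. gam k t \<noteq> x $ j"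
    and on_curve: "\<forall>k<2*g. \<forall>x\<in>U. \<forall>t\<in>{0..1}. (W k x t)^2 = (\<Prod>j\<in>UNIV. gam k t - x $ j)"
    and lift_cont: "\<forall>k<2*g. continuous_on (U \<times> {0..1}) (\<lambda>p. W k (fst p) (snd p))"
    and lift_closed: "\<forall>k<2*g. \<forall>x\<in>U. W k x 1 = W k x 0"
    and a_def: "\<forall>i x. a i x = (\<Sum>k<2*g. c k * hyp_integral n (gam k) (W k x) (x $ i))"
    and A_def: "\<forall>i x. A i x = schl_mat n (a i x)"
  shows "(\<forall>x\<in>U. \<forall>j k. k \<noteq> j \<longrightarrow>
            mat_has_deriv (\<lambda>z. A j (vupd x k z))
              (msmul (1 / (x $ k - x $ j)) (commutator (A k x) (A j x))) (x $ k))
       \<and> (\<forall>x\<in>U. \<forall>k.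
            mat_has_deriv (\<lambda>z. A k (vupd x k z))
              (- (\<Sum>j\<in>UNIV - {k}. msmul (1 / (x $ k - x $ j)) (commutator (A k x) (A j x)))) (x $ k))
       \<and> (\<forall>x\<in>U. \<forall>y\<in>U. - (\<Sum>i\<in>UNIV. A i x) = - (\<Sum>i\<in>UNIV. A i y))"
proof -
  have family: "cycle_family U (gam m) (W m)" if "m < 2 * g" for m
    using that U(1) paths avoid on_curve lift_cont lift_closed by unfold_locales auto
  have a_eq: "a = (\<lambda>i y. \<Sum>m<2 * g. c m * hyp_integral n (gam m) (W m y) (y $ i))"
    using a_def by auto
  have scalar: "scalar_schlesinger n x a" if "x \<in> U" for x
    unfolding a_eq using that distinct
    by (intro scalar_schlesinger_sum cycle_family.scalar_schlesinger_hyp_integral[OF family]) auto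
  have "(\<Sum>i\<in>UNIV. a i x) = 0" if "x \<in> U" for x
  proof -
    have "(\<Sum>i\<in>UNIV. a i x) = (\<Sum>m<2 * g. c m * (\<Sum>i\<in>UNIV. hyp_integral n (gam m) (W m x) (x $ i)))"
      unfolding a_eq by (subst sum.swap) (simp add: sum_distrib_left)
    then show ?thesis using cycle_family.sum_hyp_integral_eq_0[OF family that n] by simp
  qed
  then have sum_A: "(\<Sum>i\<in>UNIV. A i x) = (\<Sum>i\<in>UNIV. A i y)" if "x \<in> U" "y \<in> U" for x y
    using that unfolding A_def[rule_format] by (intro sum_schl_mat_eq) simp
  show ?thesis
    by (intro conjI ballI schlesinger_schl_mat[OF scalar A_def] arg_cong[where f = uminus] sum_A)
qed

end
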